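(* Fix $x\in\mathbb X$, $\Lambda\Subset\mathbb X\setminus\{x\}$ and a total order $\preceq$ on $\mathbf F(x)$. Let $X\in\mathbf F(x)$ with $Z_X(\Lambda)\neq0$. If $X\neq\{x\}$, then \[ \frac{Z_X(\Lambda\mid x)}{Z_X(\Lambda)}=1+(W(X)-1)\,R_X(X',\Lambda)\,\mathbf 1_{\{X'\subset\Lambda\}}. \] Consequently $\widehat z_X(x,\Lambda)=z(x)\big(1+(W(X)-1)R_X(X',\Lambda)\mathbf 1_{\{X'\subset\Lambda\}}\big)$, and this last identity also holds in the case $X=\{x\}$.
   Context: $\mathbb X$ is a finite or countably infinite set, $X\Subset\mathbb X$ means finite subset, $\mathbf F$ is the set of finite subsets of $\mathbb X$. Fix $z:\mathbb X\to\mathbb C$, $W:\mathbf F\to\mathbb C$; $f^X=\prod_{y\in X}f(y)$, $W(x)=W(\{x\})$; singletons $\{x\}$ are written $x$ inside arguments. For an interaction $V:\mathbf F\to\mathbb C$, the conditional interaction is $V(X\mid B)=\prod_{C\subset B}V(X\cup C)$ if $X\cap B=\varnothing$, $V(X\mid B)=0$ if $X=\{y\}$ with $y\in B$, and $V(X\mid B)=1$ otherwise; the Boltzmann factor is $\kappa(X\mid B)=\prod_{\varnothing\neq S\subset X}V(S\mid B)$; partition functions are $Z(X,\Lambda\mid B)=\sum_{Y\subset\Lambda\setminus X}z^{X\cup Y}\kappa(X\cup Y\mid B)$, $Z(\Lambda\mid B)=Z(\varnothing,\Lambda\mid B)$, with $B$ omitted when $B=\varnothing$; correlations $R(X,\Lambda\mid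 B)=Z(X,\Lambda\mid B)/Z(\Lambda\mid B)$ when the denominator is nonzero (so $R(\varnothing,\Lambda)=1$), and effective activities $\widehat z(y,\Lambda\mid B)=R(\{y\},\Lambda\mid B)$ for $y\notin\Lambda$. Let $\mathbf F(x)=\{X\Subset\mathbb X\mid x\in X\}$ and $X'=X\setminus\{x\}$. Given the total order $\preceq$ on $\mathbf F(x)$ (strict part $\prec$) and $X\in\mathbf F(x)$, define $W_X:\mathbf F\to\mathbb C$ by $W_X(Y)=W(Y)W(\{x\}\cup Y)$ if $x\notin Y$ and $\{x\}\cup Y\prec X$; $W_X(Y)=1$ if $x\in Y$ and $Y\neq X$; $W_X(Y)=W(Y)$ otherwise. Quantities built from $V=W_X$ are written $\kappa_X,Z_X,R_X,\widehat z_X$. *)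

theory Defs
  imports Complex_Main "HOL-Library.Countable_Set"
begin

definition cond_int :: "('a set \<Rightarrow> complex) \<Rightarrow> 'a set \<Rightarrow> 'a set \<Rightarrow> complex" where
  "cond_int V X B =
     (if X \<inter> B = {} then (\<Prod>C\<in>Pow B. V (X \<union> C))
      else if (\<exists>y. X = {y} \<and> y \<in> B) then 0 else 1)"

definition boltz :: "('a set \<Rightarrow> complex) \<Rightarrow> 'a set \<Rightarrow> 'a set \<Rightarrow> complex" where
  "boltz V X B = (\<Prod>S\<in>Pow X - {{}}. cond_int V S B)"

definition pfun :: "('a \<Rightarrow> complex) \<Rightarrow> ('a set \<Rightarrow> complex) \<Rightarrow> 'a set \<Rightarrow> 'a set \<Rightarrow> 'a set \<Rightarrow> complex" where
  "pfun z V X \<Lambda> B = (\<Sum>Y\<in>Pow (\<Lambda> - X). (\<Prod>y\<in>X \<union> Y. z y) * boltz V (X \<union> Y) B)"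

definition pfun0 :: "('a \<Rightarrow> complex) \<Rightarrow> ('a set \<Rightarrow> complex) \<Rightarrow> 'a set \<Rightarrow> 'a set \<Rightarrow> complex" where
  "pfun0 z V \<Lambda> B = pfun z V {} \<Lambda> B"

text \<open>Correlations R(X, Lambda | B) (meaningful when the denominator is nonzero).\<close>
definition corr :: "('a \<Rightarrow> complex) \<Rightarrow> ('a set \<Rightarrow> complex) \<Rightarrow> 'a set \<Rightarrow> 'a set \<Rightarrow> 'a set \<Rightarrow> complex" where
  "corr z V X \<Lambda> B = pfun z V X \<Lambda> B / pfun0 z V \<Lambda> B"

definition eff_act :: "('a \<Rightarrow> complex) \<Rightarrow> ('a set \<Rightarrow> complex) \<Rightarrow> 'a \<Rightarrow> 'a set \<Rightarrow> 'a set \<Rightarrow> complex" where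
  "eff_act z V y \<Lambda> B = corr z V {y} \<Lambda> B"

definition Fx :: "'a \<Rightarrow> 'a set set" where
  "Fx x = {X. finite X \<and> x \<in> X}"

text \<open>The modified interaction W_X, for an order r (set of pairs) on F(x);
  the strict part is (A,B) in r with A distinct from B.\<close>
definition W_mod :: "('a set \<Rightarrow> complex) \<Rightarrow> 'a \<Rightarrow> ('a set \<times> 'a set) set \<Rightarrow> 'a set \<Rightarrow> 'a set \<Rightarrow> complex" where
  "W_mod W x r X Y =
     (if x \<notin> Y \<and> (insert x Y, X) \<in> r \<and> insert x Y \<noteq> X then W Y * W (insert x Y)
      else if x \<in> Y \<and> Y \<noteq> X then 1
      else W Y)"

end

theory Submission
  imports Defs
begin

text \<open>Conditioning on \<open>x\<close> multiplies the Boltzmann factor of a configuration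
  \<open>Y \<subseteq> \<Lambda>\<close> by the product of \<open>W_X(S \<union> {x})\<close> over the nonempty \<open>S \<subseteq> Y\<close>. By
  construction of \<open>W_X\<close> all these factors are 1 except \<open>W_X(X) = W(X)\<close>, which occurs
  exactly when \<open>X' \<subseteq> Y\<close>; hence \<open>Z_X(\<Lambda> | x) = Z_X(\<Lambda>) + (W(X) - 1) Z_X(X', \<Lambda>)\<close>.
  Adding the point \<open>x\<close> to \<open>Y\<close> produces the same product together with \<open>z(x) W_X(x)\<close>,
  so \<open>Z_X(x, \<Lambda>) = z(x) W_X(x) Z_X(\<Lambda> | x)\<close>.\<close>

lemma cond_int_empty: "cond_int V S {} = V S"
  by (simp add: cond_int_def)

lemma boltz_empty: "boltz V A {} = (\<Prod>S\<in>Pow A - {{}}. V S)"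
  by (simp add: boltz_def cond_int_empty)

lemma boltz_cond_singleton:
  assumes "x \<notin> Y" "finite Y"
  shows "boltz V Y {x} = boltz V Y {} * (\<Prod>S\<in>Pow Y - {{}}. V (insert x S))"
proof -
  have "cond_int V S {x} = V S * V (insert x S)" if "S \<in> Pow Y - {{}}" for S
  proof -
    have "S \<inter> {x} = {}" using that assms by auto
    moreover have "Pow {x} = {{}, {x}}" by auto
    ultimately show ?thesis by (simp add: cond_int_def)
  qed
  then have "boltz V Y {x} = (\<Prod>S\<in>Pow Y - {{}}. V S * V (insert x S))"
    unfolding boltz_def by (rule prod.cong[OF refl])
  then show ?thesis by (simp add: prod.distrib boltz_empty)
qed

lemma boltz_insert:
  assumes "x \<notin> Y" "finite Y"
  shows "boltz V (insert x Y) {} = boltz V Y {} * V {x} * (\<Prod>S\<in>Pow Y - {{}}. V (insert x S))"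
proof -
  have split: "Pow (insert x Y) - {{}} = (Pow Y - {{}}) \<union> insert x ` Pow Y"
    by (auto simp: Pow_insert)
  have inj: "inj_on (insert x) (Pow Y)"
    using assms by (auto simp: inj_on_def)
  have "(\<Prod>S\<in>Pow (insert x Y) - {{}}. V S)
      = (\<Prod>S\<in>Pow Y - {{}}. V S) * (\<Prod>S\<in>insert x ` Pow Y. V S)"
    unfolding split using assms by (intro prod.union_disjoint) auto
  also have "(\<Prod>S\<in>insert x ` Pow Y. V S) = (\<Prod>S\<in>Pow Y. V (insert x S))"
    using prod.reindex[OF inj] by simp
  also have "\<dots> = V {x} * (\<Prod>S\<in>Pow Y - {{}}. V (insert x S))"
    using assms by (subst prod.remove[of _ "{}"]) auto
  finally show ?thesis by (simp add: boltz_empty mult.assoc)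
qed

lemma boltz_insert_eq_cond:
  assumes "x \<notin> Y" "finite Y"
  shows "boltz V (insert x Y) {} = V {x} * boltz V Y {x}"
  using assms by (simp add: boltz_insert boltz_cond_singleton mult_ac)

lemma pfun0_eq_sum: "pfun0 z V \<Lambda> B = (\<Sum>Y\<in>Pow \<Lambda>. (\<Prod>y\<in>Y. z y) * boltz V Y B)"
  by (simp add: pfun0_def pfun_def)

lemma pfun_eq_sum_supsets:
  assumes "finite \<Lambda>"
  shows "(if A \<subseteq> \<Lambda> then pfun z V A \<Lambda> B else 0)
       = (\<Sum>Y\<in>Pow \<Lambda>. if A \<subseteq> Y then (\<Prod>y\<in>Y. z y) * boltz V Y B else 0)"
proof (cases "A \<subseteq> \<Lambda>")
  case True
  have "(\<Sum>Y\<in>Pow \<Lambda>. if A \<subseteq> Y then (\<Prod>y\<in>Y. z y) * boltz V Y B else 0)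
      = (\<Sum>Y\<in>{Y\<in>Pow \<Lambda>. A \<subseteq> Y}. (\<Prod>y\<in>Y. z y) * boltz V Y B)"
    using assms by (intro sum.inter_filter[symmetric]) simp
  also have "\<dots> = pfun z V A \<Lambda> B"
    unfolding pfun_def
    by (rule sum.reindex_bij_witness[where i = "\<lambda>U. A \<union> U" and j = "\<lambda>Y. Y - A"])
      (use True in \<open>auto simp: Un_absorb1\<close>)
  finally show ?thesis using True by simp
next
  case False
  then have "\<not> A \<subseteq> Y" if "Y \<in> Pow \<Lambda>" for Y
    using that by auto
  then show ?thesis using False by simp
qed

lemma corr_empty:
  assumes "pfun0 z V \<Lambda> B \<noteq> 0"
  shows "corr z V {} \<Lambda> B = 1"
  using assms by (simp add: corr_def pfun0_def)

lemma pfun_singleton_eq_cond: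
  assumes "finite \<Lambda>" "x \<notin> \<Lambda>"
  shows "pfun z V {x} \<Lambda> {} = z x * V {x} * pfun0 z V \<Lambda> {x}"
proof -
  have "x \<notin> Y" "finite Y" if "Y \<in> Pow \<Lambda>" for Y
    using that assms by (auto intro: finite_subset)
  then show ?thesis
    unfolding pfun_def pfun0_eq_sum sum_distrib_left using assms(2)
    by (intro sum.cong) (auto simp: boltz_insert_eq_cond prod.insert_remove mult_ac)
qed

lemma eff_act_eq_cond_ratio:
  assumes "finite \<Lambda>" "x \<notin> \<Lambda>"
  shows "eff_act z V x \<Lambda> {} = z x * V {x} * (pfun0 z V \<Lambda> {x} / pfun0 z V \<Lambda> {})"
  using assms by (simp add: eff_act_def corr_def pfun_singleton_eq_cond)

lemma W_mod_insert:
  assumes "x \<notin> S" "x \<in> X"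
  shows "W_mod W x r X (insert x S) = (if S = X - {x} then W X else 1)"
proof -
  have "(insert x S = X) = (S = X - {x})" using assms by auto
  then show ?thesis by (auto simp: W_mod_def)
qed

lemma W_mod_singleton:
  assumes "x \<in> X"
  shows "W_mod W x r X {x} = (if X = {x} then W X else 1)"
  using W_mod_insert[of x "{}" X W r] assms by auto

lemma prod_W_mod_insert:
  assumes "x \<notin> Y" "finite Y" "x \<in> X"
  shows "(\<Prod>S\<in>Pow Y - {{}}. W_mod W x r X (insert x S))
       = (if X \<noteq> {x} \<and> X - {x} \<subseteq> Y then W X else 1)"
proof -
  have "W_mod W x r X (insert x S) = (if S = X - {x} then W X else 1)" if "S \<in> Pow Y - {{}}" for S
    using that assms by (intro W_mod_insert) auto
  then have "(\<Prod>S\<in>Pow Y - {{}}. W_mod W x r X (insert x S))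
      = (\<Prod>S\<in>Pow Y - {{}}. if S = X - {x} then W X else 1)"
    by (rule prod.cong[OF refl])
  also have "\<dots> = (if X - {x} \<in> Pow Y - {{}} then W X else 1)"
    using assms(2) by (simp add: prod.delta)
  finally show ?thesis using assms(3) by auto
qed

lemma pfun0_W_mod_cond:
  fixes W :: "'a set \<Rightarrow> complex" and r :: "('a set \<times> 'a set) set"
  assumes "finite \<Lambda>" "x \<notin> \<Lambda>" "x \<in> X"
  defines "V \<equiv> W_mod W x r X"
  shows "pfun0 z V \<Lambda> {x} = pfun0 z V \<Lambda> {}
           + (if X \<noteq> {x} then (W X - 1) * (if X - {x} \<subseteq> \<Lambda> then pfun z V (X - {x}) \<Lambda> {} else 0)
              else 0)"
proof -
  define w where "w Y = (\<Prod>y\<in>Y. z y) * boltz V Y {}" for Y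
  have "boltz V Y {x} = boltz V Y {} * (if X \<noteq> {x} \<and> X - {x} \<subseteq> Y then W X else 1)"
    if "Y \<in> Pow \<Lambda>" for Y
  proof -
    have "x \<notin> Y" "finite Y" using that assms(1,2) by (auto intro: finite_subset)
    then show ?thesis
      unfolding V_def by (simp add: boltz_cond_singleton prod_W_mod_insert assms(3))
  qed
  then have "pfun0 z V \<Lambda> {x} = (\<Sum>Y\<in>Pow \<Lambda>. w Y * (if X \<noteq> {x} \<and> X - {x} \<subseteq> Y then W X else 1))"
    unfolding pfun0_eq_sum w_def by (intro sum.cong) (simp_all add: mult.assoc)
  also have "\<dots> = (\<Sum>Y\<in>Pow \<Lambda>. w Y)
      + (if X \<noteq> {x} then (W X - 1) * (\<Sum>Y\<in>Pow \<Lambda>. if X - {x} \<subseteq> Y then w Y else 0) else 0)"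
  proof (cases "X = {x}")
    case False
    have "w Y * (if X - {x} \<subseteq> Y then W X else 1) = w Y + (W X - 1) * (if X - {x} \<subseteq> Y then w Y else 0)"
      for Y by (simp add: algebra_simps)
    then show ?thesis using False by (simp add: sum.distrib sum_distrib_left)
  qed simp
  finally show ?thesis
    unfolding w_def pfun0_eq_sum[of z V \<Lambda> "{}"] pfun_eq_sum_supsets[OF assms(1)] .
qed

theorem lemma4p2:
  fixes z :: "'a \<Rightarrow> complex" and W :: "'a set \<Rightarrow> complex"
    and x :: 'a and \<Lambda> :: "'a set" and r :: "('a set \<times> 'a set) set" and X :: "'a set"
  assumes "countable (UNIV :: 'a set)"
    and "finite \<Lambda>" and "x \<notin> \<Lambda>"
    and "linear_order_on (Fx x) r"
    and "X \<in> Fx x"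
    and "pfun0 z (W_mod W x r X) \<Lambda> {} \<noteq> 0"
  shows "(X \<noteq> {x} \<longrightarrow>
            pfun0 z (W_mod W x r X) \<Lambda> {x} / pfun0 z (W_mod W x r X) \<Lambda> {}
              = 1 + (W X - 1) * corr z (W_mod W x r X) (X - {x}) \<Lambda> {}
                      * (if X - {x} \<subseteq> \<Lambda> then 1 else 0))
       \<and> eff_act z (W_mod W x r X) x \<Lambda> {}
           = z x * (1 + (W X - 1) * corr z (W_mod W x r X) (X - {x}) \<Lambda> {}
                      * (if X - {x} \<subseteq> \<Lambda> then 1 else 0))"
proof -
  define V where "V = W_mod W x r X"
  have xX: "x \<in> X" using assms(5) by (simp add: Fx_def)
  have Z0: "pfun0 z V \<Lambda> {} \<noteq> 0" using assms(6) by (simp add: V_def)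
  note cond = pfun0_W_mod_cond[OF assms(2,3) xX, where W = W and r = r and z = z, folded V_def]
  note eff_act_ratio = eff_act_eq_cond_ratio[OF assms(2,3), of z V]
  show ?thesis
  proof (cases "X = {x}")
    case True
    then show ?thesis
      using Z0 cond eff_act_ratio corr_empty[OF Z0] W_mod_singleton[OF xX] by (simp add: V_def)
  next
    case False
    have "pfun0 z V \<Lambda> {x} / pfun0 z V \<Lambda> {}
        = 1 + (W X - 1) * corr z V (X - {x}) \<Lambda> {} * (if X - {x} \<subseteq> \<Lambda> then 1 else 0)"
      using False Z0 by (simp add: cond corr_def field_simps)
    then show ?thesis
      using False eff_act_ratio W_mod_singleton[OF xX] by (simp add: V_def)
  qed
qed

end
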